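(* Let $\mathcal F$ be a Banach space with a basis $B=(e_i)_{i\in\mathbb N}$ satisfying $\sup_i\|e_i\|_{\mathcal F}<\infty$. Let $p\in(0,\infty)$ and assume $B$ has the $p$-Temlyakov property: there is $c>0$ such that for every finite $I\subset\mathbb N$ and every $(c_i)_{i\in I}\in\mathbb R^I$, $$\tfrac1c|I|^{1/p}\min_{i\in I}|c_i|\le\Big\|\sum_{i\in I}c_ie_i\Big\|_{\mathcal F}\le c|I|^{1/p}\max_{i\in I}|c_i|.$$ Let $0<q<p$ and for $M\in\mathbb N$ define $$\Sigma^q_M=\Big\{\sum_{i=1}^Mc_ie_i:\ c_i\in\mathbb R,\ \sup_{0<\lambda<\infty}\lambda\,|\{i:|c_i|\ge\lambda\}|^{1/q}\le1\Big\}.$$ With $s=\frac1q-\frac1p$, the sequence $\Sigma^q=(\Sigma^q_M)_{M\in\mathbb N}$ is $s$-encodable in $\mathcal F$ (with the metric induced by $\|\cdot\|_{\mathcal F}$).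
   Context: A finite $X\subset A$ is an $\varepsilon$-covering of $A$ if every point of $A$ is within distance $\varepsilon$ of some point of $X$. For $\gamma,h>0$, a $(\gamma,h)$-encoding of $\Sigma=(\Sigma_M)_M$ is a sequence $(\Sigma(\gamma,h)_M)_M$ such that for some $c_1,c_2>0$ and all $M$, $\Sigma(\gamma,h)_M$ is a $c_1M^{-\gamma}$-covering of $\Sigma_M$ with $\log_2|\Sigma(\gamma,h)_M|\le c_2M^{1+h}$. $\Sigma$ is $\gamma$-encodable if it admits a $(\gamma,h)$-encoding for every $h>0$. *)

theory Defs
  imports "HOL-Analysis.Analysis"
begin

definition schauder_basis :: "(nat \<Rightarrow> 'a::banach) \<Rightarrow> bool" where
  "schauder_basis e \<longleftrightarrow> (\<forall>x. \<exists>!c::nat \<Rightarrow> real. (\<lambda>i. c i *\<^sub>R e i) sums x)"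

definition temlyakov :: "real \<Rightarrow> (nat \<Rightarrow> 'a::real_normed_vector) \<Rightarrow> bool" where
  "temlyakov p e \<longleftrightarrow> (\<exists>c>0. \<forall>I::nat set. \<forall>a::nat \<Rightarrow> real. finite I \<and> I \<noteq> {} \<longrightarrow>
      (1 / c) * real (card I) powr (1 / p) * (MIN i\<in>I. \<bar>a i\<bar>) \<le> norm (\<Sum>i\<in>I. a i *\<^sub>R e i) \<and>
      norm (\<Sum>i\<in>I. a i *\<^sub>R e i) \<le> c * real (card I) powr (1 / p) * (MAX i\<in>I. \<bar>a i\<bar>))"

definition covering :: "'a::metric_space set \<Rightarrow> 'a set \<Rightarrow> real \<Rightarrow> bool" where
  "covering X A \<epsilon> \<longleftrightarrow> finite X \<and> X \<subseteq> A \<and> (\<forall>a\<in>A. \<exists>x\<in>X. dist a x \<le> \<epsilon>)"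

definition is_encoding :: "real \<Rightarrow> real \<Rightarrow> (nat \<Rightarrow> 'a::metric_space set) \<Rightarrow> (nat \<Rightarrow> 'a set) \<Rightarrow> bool" where
  "is_encoding \<gamma> h \<Sigma> S \<longleftrightarrow> (\<exists>c1>0. \<exists>c2>0. \<forall>M::nat. M \<ge> 1 \<longrightarrow>
      covering (S M) (\<Sigma> M) (c1 * real M powr (- \<gamma>)) \<and>
      log 2 (real (card (S M))) \<le> c2 * real M powr (1 + h))"

definition encodable :: "real \<Rightarrow> (nat \<Rightarrow> 'a::metric_space set) \<Rightarrow> bool" where
  "encodable \<gamma> \<Sigma> \<longleftrightarrow> (\<forall>h>0. \<exists>S. is_encoding \<gamma> h \<Sigma> S)"

text \<open>The sets Sigma^q_M: combinations of the first M basis vectors (indices 0..M-1,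
  corresponding to e_1..e_M in the paper) whose coefficient sequence has weak-l^q
  quasi-norm at most 1.\<close>
definition weak_lq_ball :: "real \<Rightarrow> (nat \<Rightarrow> 'a::real_normed_vector) \<Rightarrow> nat \<Rightarrow> 'a set" where
  "weak_lq_ball q e M = {\<Sum>i<M. c i *\<^sub>R e i | c::nat \<Rightarrow> real.
      \<forall>t>0. t * real (card {i. i < M \<and> \<bar>c i\<bar> \<ge> t}) powr (1 / q) \<le> 1}"

end

theory Submission
  imports Defs
begin

text \<open>A weak-\<open>\<ell>\<^sup>q\<close> unit coefficient vector has all entries in \<open>[-1,1]\<close>, so \<open>\<Sigma>\<^sup>q\<^sub>M\<close> lies in the
  image of the cube \<open>[-1,1]\<^sup>M\<close>. Rounding the coefficients to the grid \<open>K\<^sup>-\<^sup>1\<int>\<close> with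
  \<open>K \<approx> M\<^sup>s\<^sup>+\<^sup>1\<close> moves a point by at most \<open>M (sup\<^sub>i \<parallel>e\<^sub>i\<parallel>) / K \<lesssim> M\<^sup>-\<^sup>s\<close> and leaves at most
  \<open>(2K+1)\<^sup>M\<close> grid points, i.e. \<open>O(M log M) = O(M\<^sup>1\<^sup>+\<^sup>h)\<close> bits for every \<open>h > 0\<close>.\<close>

lemma covering_mono: "covering X A r \<Longrightarrow> r \<le> r' \<Longrightarrow> covering X A r'"
  unfolding covering_def by force

text \<open>One representative per fibre of \<open>\<phi>\<close> is the covering.\<close>
lemma covering_by_fibres:
  fixes A :: "'a::metric_space set" and \<phi> :: "'a \<Rightarrow> 'b"
  assumes "finite G" "\<phi> ` A \<subseteq> G"
    and close: "\<And>a b. a \<in> A \<Longrightarrow> b \<in> A \<Longrightarrow> \<phi> a = \<phi> b \<Longrightarrow> dist a b \<le> \<epsilon>"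
  shows "\<exists>X. covering X A \<epsilon> \<and> card X \<le> card G"
proof -
  define r where "r g = (SOME a. a \<in> A \<and> \<phi> a = g)" for g
  have r: "r (\<phi> a) \<in> A \<and> \<phi> (r (\<phi> a)) = \<phi> a" if "a \<in> A" for a
    unfolding r_def by (rule someI[of _ a]) (use that in auto)
  have fin: "finite (\<phi> ` A)" using assms(1,2) finite_subset by blast
  have "covering (r ` \<phi> ` A) A \<epsilon>"
    unfolding covering_def using fin r close by (fastforce intro: bexI[of _ "r (\<phi> _)"])
  moreover have "card (r ` \<phi> ` A) \<le> card G"
    using card_image_le[OF fin, of r] card_mono[OF assms(1,2)] by linarith
  ultimately show ?thesis by blast
qed

lemma weak_lq_coefficient_le_1:
  fixes c :: "nat \<Rightarrow> real"
  assumes "q > 0" and weak: "\<forall>t>0. t * real (card {i. i < M \<and> \<bar>c i\<bar> \<ge> t}) powr (1 / q) \<le> 1"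
    and "i < M"
  shows "\<bar>c i\<bar> \<le> 1"
proof (rule ccontr)
  assume "\<not> \<bar>c i\<bar> \<le> 1"
  let ?N = "card {j. j < M \<and> \<bar>c j\<bar> \<ge> \<bar>c i\<bar>}"
  have "?N \<ge> 1"
    using \<open>i < M\<close> card_gt_0_iff[of "{j. j < M \<and> \<bar>c j\<bar> \<ge> \<bar>c i\<bar>}"] by fastforce
  then have "real ?N powr (1 / q) \<ge> 1"
    using \<open>q > 0\<close> by (intro ge_one_powr_ge_zero) auto
  then have "\<bar>c i\<bar> \<le> \<bar>c i\<bar> * real ?N powr (1 / q)"
    using mult_left_mono[of 1 _ "\<bar>c i\<bar>"] by simp
  moreover have "\<bar>c i\<bar> * real ?N powr (1 / q) \<le> 1"
    using weak \<open>\<not> \<bar>c i\<bar> \<le> 1\<close> by auto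
  ultimately show False using \<open>\<not> \<bar>c i\<bar> \<le> 1\<close> by linarith
qed

lemma weak_lq_ball_subset_cube:
  assumes "q > 0"
  shows "weak_lq_ball q e M \<subseteq> {\<Sum>i<M. c i *\<^sub>R e i | c. \<forall>i<M. \<bar>c i\<bar> \<le> 1}"
  unfolding weak_lq_ball_def using weak_lq_coefficient_le_1[OF assms] by blast

lemma abs_round_le:
  assumes "\<bar>x\<bar> \<le> real K"
  shows "\<bar>round x\<bar> \<le> int K"
  using of_int_round_ge[of x] of_int_round_le[of x] assms by linarith

lemma covering_cube_span:
  fixes e :: "nat \<Rightarrow> 'a::real_normed_vector"
  assumes A: "A \<subseteq> {\<Sum>i<M. c i *\<^sub>R e i | c. \<forall>i<M. \<bar>c i\<bar> \<le> 1}"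
    and B: "\<And>i. norm (e i) \<le> B" and "K \<ge> 1"
  shows "\<exists>X. covering X A (real M * B / real K) \<and> card X \<le> (2 * K + 1) ^ M"
proof -
  define coef where "coef a = (SOME c. a = (\<Sum>i<M. c i *\<^sub>R e i) \<and> (\<forall>i<M. \<bar>c i\<bar> \<le> 1))" for a
  have coef: "a = (\<Sum>i<M. coef a i *\<^sub>R e i) \<and> (\<forall>i<M. \<bar>coef a i\<bar> \<le> 1)" if "a \<in> A" for a
  proof -
    have "\<exists>c. a = (\<Sum>i<M. c i *\<^sub>R e i) \<and> (\<forall>i<M. \<bar>c i\<bar> \<le> 1)"
      using A that by blast
    then show ?thesis
      unfolding coef_def by (rule someI_ex)
  qed
  define \<phi> where "\<phi> a = restrict (\<lambda>i. round (real K * coef a i)) {..<M}" for a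
  define G where "G = PiE {..<M} (\<lambda>_. {- int K..int K})"
  have "card {- int K..int K} = 2 * K + 1"
    by simp
  then have "card G = (2 * K + 1) ^ M"
    unfolding G_def by (simp add: card_PiE)
  have "\<phi> ` A \<subseteq> G"
  proof (clarsimp simp: \<phi>_def G_def PiE_iff)
    fix a i assume "a \<in> A" "i < M"
    then have "\<bar>real K * coef a i\<bar> \<le> real K"
      using coef mult_left_mono[of "\<bar>coef a i\<bar>" 1 "real K"] by (simp add: abs_mult)
    then show "- int K \<le> round (real K * coef a i) \<and> round (real K * coef a i) \<le> int K"
      using abs_round_le[of "real K * coef a i" K] by linarith
  qed
  moreover have "dist a b \<le> real M * B / real K" if "a \<in> A" "b \<in> A" "\<phi> a = \<phi> b" for a b
  proof -
    have close: "\<bar>coef a i - coef b i\<bar> \<le> 1 / real K" if "i < M" for i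
    proof -
      have "round (real K * coef a i) = round (real K * coef b i)"
        using fun_cong[OF \<open>\<phi> a = \<phi> b\<close>, of i] \<open>i < M\<close> unfolding \<phi>_def by simp
      then have "\<bar>real K * coef a i - real K * coef b i\<bar> < 1"
        by (rule round_eq_imp_diff_1)
      then have "real K * \<bar>coef a i - coef b i\<bar> < 1"
        by (simp add: abs_mult right_diff_distrib[symmetric])
      then show ?thesis using \<open>K \<ge> 1\<close> by (simp add: field_simps)
    qed
    have "a - b = (\<Sum>i<M. (coef a i - coef b i) *\<^sub>R e i)"
      using coef[OF \<open>a \<in> A\<close>] coef[OF \<open>b \<in> A\<close>]
      by (simp add: sum_subtractf scaleR_diff_left)
    then have "dist a b = norm (\<Sum>i<M. (coef a i - coef b i) *\<^sub>R e i)"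
      by (simp add: dist_norm)
    also have "\<dots> \<le> (\<Sum>i<M. norm ((coef a i - coef b i) *\<^sub>R e i))"
      by (rule norm_sum)
    also have "\<dots> \<le> (\<Sum>i<M. 1 / real K * B)"
    proof (rule sum_mono)
      fix i assume "i \<in> {..<M}"
      then show "norm ((coef a i - coef b i) *\<^sub>R e i) \<le> 1 / real K * B"
        using mult_mono[OF close B] by simp
    qed
    finally show ?thesis by simp
  qed
  ultimately show ?thesis
    using covering_by_fibres[of G \<phi> A] \<open>card G = _\<close> unfolding G_def by (simp add: finite_PiE)
qed

text \<open>The bit count of the grid: \<open>M log\<^sub>2(2K+1) = O(M log M)\<close>, absorbed into \<open>M\<^sup>1\<^sup>+\<^sup>h\<close> via
  \<open>ln M \<le> M\<^sup>h / h\<close>.\<close>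
lemma log2_grid_card_le:
  fixes B s h :: real and M K :: nat
  assumes "B \<ge> 1" "s > 0" "h > 0" "M \<ge> 1"
    and K: "real K \<le> B * real M powr (s + 1) + 1"
  shows "log 2 (real ((2 * K + 1) ^ M)) \<le>
     (log 2 (5 * B) + (s + 1) / (h * ln 2) + 1) * real M powr (1 + h)"
proof -
  let ?L = "log 2 (5 * B)" and ?C = "(s + 1) / (h * ln 2)"
  have "1 \<le> B * real M powr (s + 1)"
    using assms(1,2,4) mult_mono[of 1 B 1 "real M powr (s + 1)"] ge_one_powr_ge_zero[of "real M"]
    by simp
  then have "real (2 * K + 1) \<le> 5 * B * real M powr (s + 1)"
    using K by simp
  then have "log 2 (real (2 * K + 1)) \<le> log 2 (5 * B * real M powr (s + 1))"
    by (intro log_mono) auto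
  also have "\<dots> = ?L + (s + 1) * log 2 (real M)"
    using assms by (simp add: log_mult log_powr)
  also have "\<dots> \<le> ?L + ?C * real M powr h"
  proof -
    have "ln (real M) \<le> real M powr h / h"
      using assms by (intro ln_powr_bound) auto
    then have "log 2 (real M) \<le> real M powr h / (h * ln 2)"
      unfolding log_def by (simp add: divide_right_mono field_simps)
    then show ?thesis
      using assms(2) mult_left_mono[of _ _ "s + 1"] by fastforce
  qed
  finally have bits: "log 2 (real (2 * K + 1)) \<le> ?L + ?C * real M powr h" .
  have "real M \<le> real M powr (1 + h)" and "?L \<ge> 0"
    using assms ge_one_powr_ge_zero[of "real M" h] by (auto simp: powr_add)
  then have "real M * ?L \<le> ?L * real M powr (1 + h)"
    using mult_right_mono by (metis mult.commute)
  moreover have "real M * log 2 (real (2 * K + 1)) \<le> real M * (?L + ?C * real M powr h)"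
    using bits by (rule mult_left_mono) simp
  moreover have "real M * (?L + ?C * real M powr h) = real M * ?L + ?C * real M powr (1 + h)"
    using assms by (simp add: powr_add algebra_simps)
  moreover have "log 2 (real ((2 * K + 1) ^ M)) = real M * log 2 (real (2 * K + 1))"
    by (simp add: log_nat_power del: of_nat_add of_nat_mult)
  moreover have "real M powr (1 + h) \<ge> 0"
    by simp
  ultimately show ?thesis
    by (simp only: distrib_right)
qed

lemma weak_lq_ball_covering:
  fixes e :: "nat \<Rightarrow> 'a::real_normed_vector"
  assumes "q > 0" "s > 0" "h > 0" "M \<ge> 1"
    and B: "\<And>i. norm (e i) \<le> B" "B \<ge> 1"
  shows "\<exists>X. covering X (weak_lq_ball q e M) (real M powr (- s)) \<and>
    log 2 (real (card X)) \<le> (log 2 (5 * B) + (s + 1) / (h * ln 2) + 1) * real M powr (1 + h)"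
proof -
  define K where "K = nat \<lceil>B * real M powr (s + 1)\<rceil>"
  have "1 \<le> B * real M powr (s + 1)"
    using assms mult_mono[of 1 B 1 "real M powr (s + 1)"] ge_one_powr_ge_zero[of "real M"] by simp
  then have K: "B * real M powr (s + 1) \<le> real K" "real K \<le> B * real M powr (s + 1) + 1"
    unfolding K_def by linarith+
  then have "K \<ge> 1"
    using \<open>1 \<le> B * _\<close> by linarith
  have "real M * B / real K \<le> real M * B / (B * real M powr (s + 1))"
    using K \<open>1 \<le> B * _\<close> assms by (intro divide_left_mono) auto
  also have "\<dots> = real M powr (- s)"
    using assms by (simp add: powr_add powr_minus field_simps)
  finally have radius: "real M * B / real K \<le> real M powr (- s)" .
  obtain X where X: "covering X (weak_lq_ball q e M) (real M * B / real K)"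
      "card X \<le> (2 * K + 1) ^ M"
    using covering_cube_span[OF weak_lq_ball_subset_cube[OF \<open>q > 0\<close>, of e M] B(1) \<open>K \<ge> 1\<close>]
    by blast
  have "log 2 (real (card X)) \<le> log 2 (real ((2 * K + 1) ^ M))"
  proof (cases "card X = 0")
    case True
    then show ?thesis by (simp add: log_def)
  next
    case False
    have "real (card X) \<le> real ((2 * K + 1) ^ M)"
      using X(2) by (simp only: of_nat_le_iff)
    then show ?thesis
      using False by (intro log_mono) auto
  qed
  also have "\<dots> \<le> (log 2 (5 * B) + (s + 1) / (h * ln 2) + 1) * real M powr (1 + h)"
    using log2_grid_card_le[OF B(2) assms(2-4) K(2)] .
  finally show ?thesis
    using covering_mono[OF X(1) radius] by blast
qed

theorem mainTheorem14:
  fixes e :: "nat \<Rightarrow> 'a::banach" and p q :: real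
  assumes "schauder_basis e"
    and "bdd_above (range (\<lambda>i. norm (e i)))"
    and "0 < p" and "temlyakov p e"
    and "0 < q" and "q < p"
  shows "encodable (1 / q - 1 / p) (weak_lq_ball q e)"
  unfolding encodable_def
proof (intro allI impI)
  fix h :: real
  assume "h > 0"
  obtain B0 where "\<And>i. norm (e i) \<le> B0"
    using assms(2) unfolding bdd_above_def by auto
  then have B: "\<And>i. norm (e i) \<le> max 1 B0" "max 1 B0 \<ge> 1"
    by (auto intro: le_max_iff_disj[THEN iffD2])
  let ?s = "1 / q - 1 / p"
  let ?c2 = "log 2 (5 * max 1 B0) + (?s + 1) / (h * ln 2) + 1"
  have "?s > 0"
    using assms(3,5,6) by (simp add: frac_less2)
  have "?c2 > 0"
    using B(2) \<open>?s > 0\<close> \<open>h > 0\<close> by (simp add: add_nonneg_pos)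
  have "\<forall>M. \<exists>X. M \<ge> 1 \<longrightarrow> covering X (weak_lq_ball q e M) (1 * real M powr (- ?s)) \<and>
      log 2 (real (card X)) \<le> ?c2 * real M powr (1 + h)"
    using weak_lq_ball_covering[OF \<open>q > 0\<close> \<open>?s > 0\<close> \<open>h > 0\<close> _ B] by simp
  then obtain S where "\<forall>M \<ge> 1. covering (S M) (weak_lq_ball q e M) (1 * real M powr (- ?s)) \<and>
      log 2 (real (card (S M))) \<le> ?c2 * real M powr (1 + h)"
    by metis
  then show "\<exists>S. is_encoding ?s h (weak_lq_ball q e) S"
    unfolding is_encoding_def using \<open>?c2 > 0\<close> by (intro exI[of _ S] exI[of _ 1] exI[of _ ?c2]) auto
qed

end
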